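(* Let $A$ be a complex vector space of dimension $n\ge2$, let $h$ be a symmetric bilinear form on $A$, let $c\in A$ with $h(c,c)=0$ and $h(\cdot,c)\neq0$, and define $x*y=-h(y,c)x+h(x,y)c$. Then $(A,* )$ is isomorphic to $A^{(k)}_{(5)}$ for some $k\in\{0,\dots,n-2\}$, where $A^{(k)}_{(5)}$ has basis $e_1,\dots,e_n$ and nonzero products of basis vectors $e_2e_1=-e_1$, $e_2e_2=e_2$, $e_je_2=e_j$ ($3\le j\le n$), $e_le_l=e_1$ ($3\le l\le k+2$). *)

theory Defs
  imports "HOL-Analysis.Analysis"
begin

text \<open>The n-dimensional complex vector space is modelled as complex^'n, n = CARD('n),
  with complex scalar multiplication (*s).\<close>

definition sym_bilinear_C :: "(complex^'n \<Rightarrow> complex^'n \<Rightarrow> complex) \<Rightarrow> bool" where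
  "sym_bilinear_C h \<longleftrightarrow>
     (\<forall>x y. h x y = h y x) \<and>
     (\<forall>x y z. h (x + y) z = h x z + h y z) \<and>
     (\<forall>a x z. h (a *s x) z = a * h x z)"

definition hc_mult :: "(complex^'n \<Rightarrow> complex^'n \<Rightarrow> complex) \<Rightarrow> complex^'n
    \<Rightarrow> complex^'n \<Rightarrow> complex^'n \<Rightarrow> complex^'n" where
  "hc_mult h c x y = (- h y c) *s x + (h x y) *s c"

definition A5_table :: "nat \<Rightarrow> (nat \<Rightarrow> complex^'n) \<Rightarrow> nat \<Rightarrow> nat \<Rightarrow> complex^'n" where
  "A5_table k e i j =
     (if i = 2 \<and> j = 1 then - e 1
      else if i = 2 \<and> j = 2 then e 2
      else if 3 \<le> i \<and> j = 2 then e i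
      else if i = j \<and> 3 \<le> i \<and> i \<le> k + 2 then e 1
      else 0)"

definition is_cbasis :: "nat \<Rightarrow> (nat \<Rightarrow> complex^'n) \<Rightarrow> bool" where
  "is_cbasis n e \<longleftrightarrow>
     inj_on e {1..n} \<and> vec.independent (e ` {1..n}) \<and> vec.span (e ` {1..n}) = UNIV"

text \<open>An algebra (complex^'n, mul) is isomorphic to A^(k)_(5) (of dimension n) iff it has a
  basis e_1..e_n whose products are given by the table of A^(k)_(5) (the isomorphism maps
  the defining basis of A^(k)_(5) to e; by bilinearity this determines all products).\<close>
definition iso_A5 :: "nat \<Rightarrow> nat \<Rightarrow> (complex^'n \<Rightarrow> complex^'n \<Rightarrow> complex^'n) \<Rightarrow> bool" where
  "iso_A5 n k mul \<longleftrightarrow>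
     (\<exists>e. is_cbasis n e \<and> (\<forall>i\<in>{1..n}. \<forall>j\<in>{1..n}. mul (e i) (e j) = A5_table k e i j))"

end

theory Submission
  imports Defs
begin

(* Since c is isotropic and h(-,c) is nonzero, there is e with h(e,c) = -1 and h(e,e) = 0.
   The space is then the direct sum of span {c, e} and the h-orthogonal complement W of {c, e}.
   Over the complex numbers every symmetric bilinear form has a basis in which its Gram matrix
   is diagonal with entries 1 (k times) and 0: split off an anisotropic vector, normalised by a
   square root, and recurse on its orthogonal complement.  In the basis c, e, f_1, ..., f_(n-2)
   with f a diagonal basis of W, the product x*y = -h(y,c) x + h(x,y) c is exactly the
   multiplication table of A^(k)_(5). *)

definition A5_gram :: "nat \<Rightarrow> nat \<Rightarrow> nat \<Rightarrow> complex" where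
  "A5_gram k i j =
     (if i = 1 \<and> j = 2 \<or> i = 2 \<and> j = 1 then - 1
      else if i = j \<and> 3 \<le> i \<and> i \<le> k + 2 then 1
      else 0)"

lemma iso_A5_if_gram:
  fixes h :: "complex^'n \<Rightarrow> complex^'n \<Rightarrow> complex"
  assumes "is_cbasis n e" and "e 1 = c"
    and gram: "\<And>i j. i \<in> {1..n} \<Longrightarrow> j \<in> {1..n} \<Longrightarrow> h (e i) (e j) = A5_gram k i j"
  shows "iso_A5 n k (hc_mult h c)"
  unfolding iso_A5_def
proof (intro exI[of _ e] conjI ballI)
  fix i j assume ij: "i \<in> {1..n}" "j \<in> {1..n}"
  then have "h (e j) c = (if j = 2 then - 1 else 0)"
    using gram[of j 1] \<open>e 1 = c\<close> by (auto simp: A5_gram_def)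
  moreover have "i = 1 \<or> i = 2 \<or> 3 \<le> i"
    using ij by auto
  ultimately show "hc_mult h c (e i) (e j) = A5_table k e i j"
    using gram[OF ij] \<open>e 1 = c\<close>
    by (auto simp: hc_mult_def A5_table_def A5_gram_def vector_smult_lneg)
qed (fact assms(1))

lemma is_cbasis_nth:
  fixes bs :: "(complex^'n) list"
  assumes "distinct bs" and "vec.independent (set bs)" and "vec.span (set bs) = UNIV"
  shows "is_cbasis (length bs) (\<lambda>i. bs ! (i - 1))"
proof -
  have "(\<lambda>i. bs ! (i - 1)) ` {1..length bs} = set bs"
    by (force simp: set_conv_nth image_iff intro: bexI[where x = "Suc _"])
  moreover have "inj_on (\<lambda>i. bs ! (i - 1)) {1..length bs}"
    using assms(1) by (auto simp: inj_on_def nth_eq_iff_index_eq)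
  ultimately show ?thesis
    using assms unfolding is_cbasis_def by simp
qed

lemma length_basis_list_eq_CARD:
  fixes bs :: "(complex^'n) list"
  assumes "distinct bs" and "vec.independent (set bs)" and "vec.span (set bs) = UNIV"
  shows "length bs = CARD('n)"
  by (metis assms distinct_card vec.dim_UNIV vec.dim_span_eq_card_independent vec_dim_card)

locale complex_sym_bilinear =
  fixes h :: "complex^'n \<Rightarrow> complex^'n \<Rightarrow> complex"
  assumes sym_bilinear: "sym_bilinear_C h"
begin

lemma commute: "h x y = h y x"
  using sym_bilinear unfolding sym_bilinear_C_def by blast

lemma add_left [simp]: "h (x + y) z = h x z + h y z"
  using sym_bilinear unfolding sym_bilinear_C_def by blast

lemma scale_left [simp]: "h (a *s x) z = a * h x z"
  using sym_bilinear unfolding sym_bilinear_C_def by blast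

lemma add_right [simp]: "h z (x + y) = h z x + h z y"
  by (metis commute add_left)

lemma scale_right [simp]: "h z (a *s x) = a * h z x"
  by (metis commute scale_left)

lemma zero_left [simp]: "h 0 z = 0"
  using scale_left[of 0 0 z] by simp

lemma minus_left [simp]: "h (- x) z = - h x z"
  using scale_left[of "- 1" x z] by simp

lemma diff_left [simp]: "h (x - y) z = h x z - h y z"
  by (metis diff_conv_add_uminus add_left minus_left)

definition orth :: "(complex^'n) set \<Rightarrow> (complex^'n) set \<Rightarrow> (complex^'n) set" where
  "orth W V = {x \<in> W. \<forall>v\<in>V. h x v = 0}"

lemma subspace_orth: "vec.subspace W \<Longrightarrow> vec.subspace (orth W V)"
  unfolding orth_def vec.subspace_def by auto

lemma isotropic_subspace_orthogonal:
  assumes "vec.subspace W" and "\<And>x. x \<in> W \<Longrightarrow> h x x = 0" and "x \<in> W" "y \<in> W"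
  shows "h x y = 0"
proof -
  have "x + y \<in> W"
    using assms by (simp add: vec.subspace_add)
  then have "h (x + y) (x + y) = 0"
    using assms(2) by blast
  moreover have "h (x + y) (x + y) = h x x + h x y + (h y x + h y y)"
    by simp
  ultimately have "h x y + h x y = 0"
    using assms(2-4) commute[of y x] by simp
  then show ?thesis
    by (metis mult_2 mult_eq_0_iff zero_neq_numeral)
qed

(* The only use of complex scalars: normalising needs square roots. *)
lemma csqrt_normalised_unit:
  assumes "h v v \<noteq> 0"
  shows "h ((1 / csqrt (h v v)) *s v) ((1 / csqrt (h v v)) *s v) = 1"
  using assms by (simp add: field_simps power2_eq_square[symmetric])

lemma span_insert_orth_unit:
  assumes "vec.subspace W" and "v \<in> W" and "h v v = 1"
  shows "vec.span (insert v (orth W {v})) = W"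
proof (rule vec.span_subspace)
  show "insert v (orth W {v}) \<subseteq> W"
    using \<open>v \<in> W\<close> by (auto simp: orth_def)
  show "W \<subseteq> vec.span (insert v (orth W {v}))"
  proof
    fix x assume "x \<in> W"
    then have "x - h x v *s v \<in> orth W {v}"
      using assms by (simp add: orth_def vec.subspace_diff vec.subspace_scale)
    then have "x - h x v *s v \<in> vec.span (orth W {v})"
      by (rule vec.span_base)
    then show "x \<in> vec.span (insert v (orth W {v}))"
      unfolding vec.span_insert by blast
  qed
qed (fact assms(1))

lemma dim_orth_unit:
  assumes "vec.subspace W" and "v \<in> W" and "h v v = 1"
  shows "vec.dim W = Suc (vec.dim (orth W {v}))"
proof -
  have "vec.span (orth W {v}) = orth W {v}"
    using subspace_orth[OF assms(1)] by (rule vec.span_eq_iff[THEN iffD2])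
  moreover have "v \<notin> orth W {v}"
    using \<open>h v v = 1\<close> by (simp add: orth_def)
  ultimately have "v \<notin> vec.span (orth W {v})"
    by metis
  have "vec.dim W = vec.dim (vec.span (insert v (orth W {v})))"
    by (simp only: span_insert_orth_unit[OF assms])
  also have "\<dots> = vec.dim (insert v (orth W {v}))"
    by (rule vec.dim_span)
  also have "\<dots> = Suc (vec.dim (orth W {v}))"
    using \<open>v \<notin> vec.span (orth W {v})\<close> by (simp add: vec.dim_insert)
  finally show ?thesis .
qed

definition diagonal_basis :: "(complex^'n) set \<Rightarrow> nat \<Rightarrow> (complex^'n) list \<Rightarrow> bool" where
  "diagonal_basis W k fs \<longleftrightarrow>
     distinct fs \<and> vec.independent (set fs) \<and> vec.span (set fs) = W \<and> k \<le> length fs \<and>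
     (\<forall>i<length fs. \<forall>j<length fs. h (fs ! i) (fs ! j) = (if i = j \<and> i < k then 1 else 0))"

lemma diagonal_basis_isotropic:
  assumes "vec.subspace W" and "\<And>x. x \<in> W \<Longrightarrow> h x x = 0"
  shows "\<exists>fs. diagonal_basis W 0 fs"
proof -
  obtain B where B: "B \<subseteq> W" "vec.independent B" "W \<subseteq> vec.span B"
    by (meson vec.basis_exists)
  have "finite B"
    using B(2) by (rule vec.finiteI_independent)
  then obtain fs where fs: "set fs = B" "distinct fs"
    using finite_distinct_list by blast
  have "vec.span (set fs) = W"
    using B assms(1) fs(1) vec.span_subspace by blast
  moreover have "h (fs ! i) (fs ! j) = 0" if "i < length fs" "j < length fs" for i j
    using isotropic_subspace_orthogonal[OF assms] B(1) fs(1) nth_mem[OF that(1)] nth_mem[OF that(2)]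
    by blast
  ultimately have "diagonal_basis W 0 fs"
    using fs B(2) by (simp add: diagonal_basis_def)
  then show ?thesis ..
qed

lemma diagonal_basis_Cons:
  assumes "vec.subspace W" and "v \<in> W" and "h v v = 1"
    and "diagonal_basis (orth W {v}) k fs"
  shows "diagonal_basis W (Suc k) (v # fs)"
proof -
  have fs: "distinct fs" "vec.independent (set fs)" "vec.span (set fs) = orth W {v}" "k \<le> length fs"
    "\<forall>i<length fs. \<forall>j<length fs. h (fs ! i) (fs ! j) = (if i = j \<and> i < k then 1 else 0)"
    using assms(4) by (simp_all add: diagonal_basis_def)
  have fs_orth: "set fs \<subseteq> orth W {v}"
    using fs(3) vec.span_superset by blast
  then have v_notin: "v \<notin> vec.span (set fs)" "v \<notin> set fs"
    using fs(3) \<open>h v v = 1\<close> by (auto simp: orth_def)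
  have "vec.span (set (v # fs)) = vec.span (insert v (orth W {v}))"
    unfolding fs(3)[symmetric] list.set(2) vec.span_insert vec.span_span ..
  also have "\<dots> = W"
    by (rule span_insert_orth_unit[OF assms(1-3)])
  finally have span: "vec.span (set (v # fs)) = W" .
  have fs_v: "h (fs ! m) v = 0" "h v (fs ! m) = 0" if "m < length fs" for m
    using fs_orth nth_mem[OF that] commute[of v] by (auto simp: orth_def)
  have "h ((v # fs) ! i) ((v # fs) ! j) = (if i = j \<and> i < Suc k then 1 else 0)"
    if "i < length (v # fs)" "j < length (v # fs)" for i j
  proof (cases i; cases j)
    fix i' j' assume "i = Suc i'" "j = Suc j'"
    then show ?thesis
      using fs(5) that by simp
  qed (use that \<open>h v v = 1\<close> fs_v in auto)
  then show ?thesis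
    unfolding diagonal_basis_def using fs v_notin span by (simp add: vec.independent_insert)
qed

lemma diagonal_basis_exists:
  assumes "vec.subspace W"
  shows "\<exists>k fs. diagonal_basis W k fs"
  using assms
proof (induction "vec.dim W" arbitrary: W rule: less_induct)
  case less
  show ?case
  proof (cases "\<forall>x\<in>W. h x x = 0")
    case True
    then show ?thesis
      using diagonal_basis_isotropic[OF less.prems] by blast
  next
    case False
    then obtain v where v: "v \<in> W" "h v v \<noteq> 0"
      by blast
    define u where "u = (1 / csqrt (h v v)) *s v"
    have u: "u \<in> W" "h u u = 1"
      using v less.prems csqrt_normalised_unit by (simp_all add: u_def vec.subspace_scale)
    have "vec.dim (orth W {u}) < vec.dim W"
      using dim_orth_unit[OF less.prems u] by simp
    then obtain k fs where "diagonal_basis (orth W {u}) k fs"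
      using less.hyps subspace_orth[OF less.prems] by blast
    then show ?thesis
      using diagonal_basis_Cons[OF less.prems u] by blast
  qed
qed

lemma hyperbolic_partner_exists:
  assumes "h c c = 0" and "h u c \<noteq> 0"
  shows "\<exists>e. h e c = - 1 \<and> h e e = 0"
proof -
  define u' where "u' = (- 1 / h u c) *s u"
  have u': "h u' c = - 1"
    using assms(2) by (simp add: u'_def)
  define e where "e = u' + (h u' u' / 2) *s c"
  have "h e c = - 1" "h e e = 0"
    using u' assms(1) commute[of c u'] by (simp_all add: e_def field_simps)
  then show ?thesis
    by blast
qed

lemma hyperbolic_pair_extends_basis:
  assumes "h c c = 0" and "h e e = 0" and "h e c = - 1"
    and "distinct fs" and "vec.independent (set fs)" and "vec.span (set fs) = orth UNIV {c, e}"
  shows "distinct (c # e # fs)" and "vec.independent (set (c # e # fs))"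
    and "vec.span (set (c # e # fs)) = UNIV"
proof -
  have hce: "h c e = - 1"
    using assms(3) commute by metis
  have fs_orth: "set fs \<subseteq> orth UNIV {c, e}"
    using assms(6) vec.span_superset by blast
  then show "distinct (c # e # fs)"
    using assms(1-4) hce by (auto simp: orth_def)
  have "e \<notin> vec.span (set fs)"
    using assms(3,6) by (simp add: orth_def)
  moreover have "c \<notin> vec.span (insert e (set fs))"
  proof
    assume "c \<in> vec.span (insert e (set fs))"
    then obtain t where "c - t *s e \<in> orth UNIV {c, e}"
      unfolding vec.span_insert assms(6) by blast
    then show False
      using hce assms(2) by (simp add: orth_def)
  qed
  ultimately show "vec.independent (set (c # e # fs))"
    using assms(5) by (simp add: vec.independent_insert)
  show "vec.span (set (c # e # fs)) = UNIV"
  proof -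
    have "x \<in> vec.span (set (c # e # fs))" for x
    proof -
      have "x + h x e *s c + h x c *s e \<in> vec.span (set fs)"
        using assms(1-3) hce by (simp add: assms(6) orth_def)
      then have "x + h x e *s c + h x c *s e \<in> vec.span (set (c # e # fs))"
        by (meson set_subset_Cons subsetD vec.span_mono)
      moreover have "c \<in> vec.span (set (c # e # fs))" "e \<in> vec.span (set (c # e # fs))"
        by (simp_all add: vec.span_base)
      ultimately show ?thesis
        by (metis add_diff_cancel_right' vec.span_diff vec.span_scale)
    qed
    then show ?thesis
      by blast
  qed
qed

lemma gram_hyperbolic_diagonal:
  assumes "h c c = 0" and "h e e = 0" and "h e c = - 1"
    and "diagonal_basis (orth UNIV {c, e}) k fs"
    and "i \<in> {1..length fs + 2}" and "j \<in> {1..length fs + 2}"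
  shows "h ((c # e # fs) ! (i - 1)) ((c # e # fs) ! (j - 1)) = A5_gram k i j"
proof -
  have diag: "h (fs ! i) (fs ! j) = (if i = j \<and> i < k then 1 else 0)"
    if "i < length fs" "j < length fs" for i j
    using assms(4) that by (simp add: diagonal_basis_def)
  have "set fs \<subseteq> orth UNIV {c, e}"
    using assms(4) vec.span_superset[of "set fs"] by (simp add: diagonal_basis_def)
  then have orth_fs: "h (fs ! m) c = 0" "h (fs ! m) e = 0" "h c (fs ! m) = 0" "h e (fs ! m) = 0"
    if "m < length fs" for m
    using nth_mem[OF that] commute[of c] commute[of e] by (auto simp: orth_def)
  have nth: "(c # e # fs) ! (m - 1) = fs ! (m - 3)" if "3 \<le> m" for m
    using that by (simp add: nth_Cons' numeral_3_eq_3)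
  have hce: "h c e = - 1"
    using assms(3) commute by metis
  show ?thesis
  proof (cases "3 \<le> i")
    case i: True
    show ?thesis
    proof (cases "3 \<le> j")
      case j: True
      have "i - 3 < length fs" "j - 3 < length fs"
        using assms(5,6) i j by auto
      then show ?thesis
        unfolding nth[OF i] nth[OF j] diag[OF \<open>i - 3 < length fs\<close> \<open>j - 3 < length fs\<close>]
        using i j by (auto simp: A5_gram_def)
    next
      case False
      then have "j = 1 \<or> j = 2"
        using assms(6) by auto
      moreover have "i - 3 < length fs"
        using assms(5) i by auto
      ultimately show ?thesis
        unfolding nth[OF i] using i orth_fs[of "i - 3"] by (auto simp: A5_gram_def)
    qed
  next
    case False
    then have i: "i = 1 \<or> i = 2"
      using assms(5) by auto
    show ?thesis
    proof (cases "3 \<le> j")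
      case j: True
      have "j - 3 < length fs"
        using assms(6) j by auto
      then show ?thesis
        unfolding nth[OF j] using i j orth_fs[of "j - 3"] by (auto simp: A5_gram_def)
    next
      case False
      then have "j = 1 \<or> j = 2"
        using assms(6) by auto
      then show ?thesis
        using i assms(1-3) hce by (auto simp: A5_gram_def)
    qed
  qed
qed

end

theorem proposition3p8:
  fixes h :: "complex^'n \<Rightarrow> complex^'n \<Rightarrow> complex" and c :: "complex^'n"
  assumes "CARD('n) \<ge> 2"
    and "sym_bilinear_C h"
    and "h c c = 0" and "\<exists>x. h x c \<noteq> 0"
  shows "\<exists>k\<in>{0..CARD('n)-2}. iso_A5 CARD('n) k (hc_mult h c)"
proof -
  interpret complex_sym_bilinear h
    using assms(2) by (rule complex_sym_bilinear.intro)
  obtain e where e: "h e c = - 1" "h e e = 0"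
    using hyperbolic_partner_exists assms(3,4) by blast
  obtain k fs where fs: "diagonal_basis (orth UNIV {c, e}) k fs"
    using diagonal_basis_exists subspace_orth vec.subspace_UNIV by blast
  define bs where "bs = c # e # fs"
  have basis: "distinct bs" "vec.independent (set bs)" "vec.span (set bs) = UNIV"
    using hyperbolic_pair_extends_basis[OF assms(3) e(2,1)] fs
    unfolding bs_def diagonal_basis_def by blast+
  then have len: "length bs = CARD('n)"
    by (rule length_basis_list_eq_CARD)
  have "iso_A5 (length bs) k (hc_mult h c)"
    using is_cbasis_nth[OF basis] gram_hyperbolic_diagonal[OF assms(3) e(2,1) fs]
    by (intro iso_A5_if_gram[where e = "\<lambda>i. bs ! (i - 1)"]) (auto simp: bs_def)
  moreover have "k \<le> length fs"
    using fs unfolding diagonal_basis_def by blast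
  ultimately show ?thesis
    using len by (auto simp: bs_def)
qed

end
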